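(* Let $F$ be a Banach lattice. The set of weakly dispersed closed subspaces of $F$ is open in the gap topology, and so is the set of strongly dispersed closed subspaces. Moreover, for a closed subspace $E$ of $F$ the following are equivalent: (i) $E$ is weakly (resp. strongly) dispersed; (ii) the un-topology (resp. una-topology) coincides with the norm topology on $E$; (iii) the semi-norm $\rho_E$ and the un-topology (resp. una-topology) are complementary on $F$, i.e. there is no net in $\mathrm{S}_F$ which is null both in the un-topology (resp. una-topology) and with respect to $\rho_E$.
   Context: $\mathrm{S}_X$ denotes the unit sphere of a normed space $X$. $\rho_E(f)$ is the distance from $f$ to $E$. The un-topology on $F$ is the linear topology with a base of zero neighborhoods $\{f\in F:\||f|\wedge h\|<\varepsilon\}$, $h\in F_+$, $\varepsilon>0$. $F^a$ is the (closed) ideal of order continuous elements of $F$, and the una-topology is defined like the un-topology but with $h\in F^a_+$ only. A subspace $E$ is weakly (resp. strongly) dispersed if some un- (resp. una-) neighborhood of $0_F$ is disjoint from $\mathrm{S}_E$. The gap topology on closed subspaces of $F$ is given by the metric $d_2(G,H)$ equal to the Hausdorff distance between $\mathrm{S}_G$ and $\mathrm{S}_H$. *)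

theory Defs
  imports "HOL-Analysis.Analysis"
begin

class banach_lattice = banach + ordered_real_vector + lattice +
  assumes norm_lattice_mono: "sup x (- x) \<le> sup y (- y) \<Longrightarrow> norm x \<le> norm y"

definition labs :: "'a::banach_lattice \<Rightarrow> 'a" where
  "labs x = sup x (- x)"

definition unitS :: "'a::real_normed_vector set \<Rightarrow> 'a set" where
  "unitS E = {x \<in> E. norm x = 1}"

definition closed_subspace :: "'a::real_normed_vector set \<Rightarrow> bool" where
  "closed_subspace E \<longleftrightarrow> subspace E \<and> closed E"

text \<open>Order continuous elements (the ideal F^a): every downward directed set
(= decreasing net) contained in [0,|x|] with infimum 0 has infimum of norms 0.\<close>
definition order_continuous :: "'a::banach_lattice \<Rightarrow> bool" where
  "order_continuous x \<longleftrightarrow>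
     (\<forall>D. D \<noteq> {} \<and> D \<subseteq> {y. 0 \<le> y \<and> y \<le> labs x}
          \<and> (\<forall>a\<in>D. \<forall>b\<in>D. \<exists>c\<in>D. c \<le> a \<and> c \<le> b)
          \<and> (\<forall>z. (\<forall>d\<in>D. z \<le> d) \<longrightarrow> z \<le> 0)
        \<longrightarrow> (\<forall>\<epsilon>>0. \<exists>d\<in>D. norm d < \<epsilon>))"

definition un_topology_on :: "'a::banach_lattice set \<Rightarrow> 'a topology" where
  "un_topology_on H = topology (\<lambda>U. \<forall>x\<in>U. \<exists>h\<in>H. \<exists>\<epsilon>>0.
       {y. norm (inf (labs (y - x)) h) < \<epsilon>} \<subseteq> U)"

definition un_topology :: "'a::banach_lattice topology" where
  "un_topology = un_topology_on {h. 0 \<le> h}"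

definition una_topology :: "'a::banach_lattice topology" where
  "una_topology = un_topology_on {h. 0 \<le> h \<and> order_continuous h}"

definition weakly_dispersed :: "'a::banach_lattice set \<Rightarrow> bool" where
  "weakly_dispersed E \<longleftrightarrow> (\<exists>U. openin un_topology U \<and> 0 \<in> U \<and> U \<inter> unitS E = {})"

definition strongly_dispersed :: "'a::banach_lattice set \<Rightarrow> bool" where
  "strongly_dispersed E \<longleftrightarrow> (\<exists>U. openin una_topology U \<and> 0 \<in> U \<and> U \<inter> unitS E = {})"

text \<open>Nets are rendered as maps
x :: 'a \<Rightarrow> 'a along a proper filter on 'a (every net gives such a pair via its
image filter).\<close>
definition complementary :: "'a::banach_lattice topology \<Rightarrow> 'a set \<Rightarrow> bool" where
  "complementary T E \<longleftrightarrow>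
     \<not> (\<exists>(x::'a \<Rightarrow> 'a) (F::'a filter). F \<noteq> bot
          \<and> eventually (\<lambda>i. x i \<in> unitS UNIV) F
          \<and> limitin T x 0 F
          \<and> ((\<lambda>i. infdist (x i) E) \<longlongrightarrow> 0) F)"

text \<open>Hausdorff distance (values in [0,\<infinity>]; sup over empty set is 0,
inf over empty set is \<infinity>) and the gap metric d2.\<close>
definition hausdorff_dist :: "'a::metric_space set \<Rightarrow> 'a set \<Rightarrow> ennreal" where
  "hausdorff_dist A B = max (SUP x\<in>A. INF y\<in>B. ennreal (dist x y))
                             (SUP y\<in>B. INF x\<in>A. ennreal (dist x y))"

definition gap_dist :: "'a::real_normed_vector set \<Rightarrow> 'a set \<Rightarrow> ennreal" where
  "gap_dist G H = hausdorff_dist (unitS G) (unitS H)"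

definition gap_topology :: "'a::real_normed_vector set topology" where
  "gap_topology = topology (\<lambda>W. W \<subseteq> Collect closed_subspace \<and>
      (\<forall>G\<in>W. \<exists>\<delta>>0. \<forall>H. closed_subspace H \<and> gap_dist G H < ennreal \<delta> \<longrightarrow> H \<in> W))"

end

theory Submission
  imports Defs "HOL-Library.Lattice_Algebras"
begin

text \<open>For a set \<open>H\<close> of positive elements closed under addition (both \<open>F\<^sub>+\<close> and
\<open>F\<^sup>a\<^sub>+\<close> qualify), the quantities \<open>\<parallel>|f| \<sqinter> h\<parallel>\<close> with \<open>h \<in> H\<close> behave like
translation-invariant pseudo-norms dominated by the norm, and the sets where one of them
is small form a base at \<open>0\<close> of the topology generated by \<open>H\<close>. Hence a subspace \<open>E\<close> is
dispersed iff some \<open>h \<in> H\<close> has \<open>\<parallel>|s| \<sqinter> h\<parallel> \<ge> \<epsilon>\<close> on the unit sphere of \<open>E\<close>. Scaling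
turns this bound into \<open>\<parallel>|f| \<sqinter> h\<parallel> \<ge> r\<epsilon>\<close> for \<open>f \<in> E\<close> with \<open>r \<le> \<parallel>f\<parallel>\<close>, \<open>r \<le> 1\<close>, which
makes the \<open>h\<close>-neighbourhoods norm-small on \<open>E\<close> and prevents a unit net from being both
\<open>h\<close>-null and close to \<open>E\<close>. Since \<open>\<parallel>|f| \<sqinter> h\<parallel>\<close> is \<open>1\<close>-Lipschitz for the norm, a bound
\<open>\<epsilon>\<close> on \<open>S\<^sub>G\<close> survives as \<open>\<epsilon>/2\<close> on \<open>S\<^sub>H\<close> whenever the gap between \<open>G\<close> and \<open>H\<close> is
below \<open>\<epsilon>/2\<close>.\<close>

context banach_lattice
begin

subclass lattice_ab_group_add ..

end

lemma labs_eq_self: "0 \<le> (a::'a::banach_lattice) \<Longrightarrow> labs a = a"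
proof -
  assume "0 \<le> a"
  then have "- a \<le> a"
    using neg_le_0_iff_le order_trans by blast
  then show ?thesis
    unfolding labs_def by (rule sup_absorb1)
qed

lemma labs_nonneg: "0 \<le> labs (x::'a::banach_lattice)"
proof -
  have "x + - x \<le> labs x + labs x"
    unfolding labs_def by (intro add_mono) auto
  then show ?thesis by simp
qed

lemma labs_0 [simp]: "labs (0::'a::banach_lattice) = 0"
  by (simp add: labs_eq_self)

lemma norm_mono_nonneg: "0 \<le> (a::'a::banach_lattice) \<Longrightarrow> a \<le> b \<Longrightarrow> norm a \<le> norm b"
  using norm_lattice_mono[of a b] labs_eq_self[of a] labs_eq_self[of b] order_trans[of 0 a b]
  unfolding labs_def by simp

lemma norm_labs [simp]: "norm (labs (x::'a::banach_lattice)) = norm x"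
proof -
  have "sup (labs x) (- labs x) = sup x (- x)"
    using labs_eq_self[OF labs_nonneg, of x] unfolding labs_def .
  then show ?thesis
    using norm_lattice_mono[of x "labs x"] norm_lattice_mono[of "labs x" x] by simp
qed

lemma labs_add_le: "labs ((x::'a::banach_lattice) + y) \<le> labs x + labs y"
  unfolding labs_def
proof (rule sup_least)
  show "x + y \<le> sup x (- x) + sup y (- y)"
    by (intro add_mono sup_ge1)
  have "- x + - y \<le> sup x (- x) + sup y (- y)"
    by (intro add_mono sup_ge2)
  then show "- (x + y) \<le> sup x (- x) + sup y (- y)"
    by simp
qed

lemma inf_add_le_add_inf:
  fixes a b c :: "'a::lattice_ab_group_add"
  assumes "0 \<le> a" "0 \<le> b" "0 \<le> c"
  shows "inf (a + b) c \<le> inf a c + inf b c"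
proof -
  have "inf a c + inf b c = inf (inf (a + b) (c + b)) (inf (a + c) (c + c))"
    by (simp add: add_inf_distrib_left add_inf_distrib_right)
  moreover have "inf (a + b) c \<le> inf (inf (a + b) (c + b)) (inf (a + c) (c + c))"
    using assms by (intro le_infI; meson add_increasing add_increasing2 inf_le1 inf_le2
        order_refl order_trans)
  ultimately show ?thesis
    by simp
qed

lemma scaleR_inf:
  fixes a b :: "'a::{ordered_real_vector, lattice}"
  assumes c: "0 < c"
  shows "c *\<^sub>R inf a b = inf (c *\<^sub>R a) (c *\<^sub>R b)"
proof (rule antisym)
  show "c *\<^sub>R inf a b \<le> inf (c *\<^sub>R a) (c *\<^sub>R b)"
    using c by (intro inf_greatest scaleR_left_mono) auto
  have "inverse c *\<^sub>R inf (c *\<^sub>R a) (c *\<^sub>R b) \<le> inverse c *\<^sub>R (c *\<^sub>R a)"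
    "inverse c *\<^sub>R inf (c *\<^sub>R a) (c *\<^sub>R b) \<le> inverse c *\<^sub>R (c *\<^sub>R b)"
    using c by (intro scaleR_left_mono; simp)+
  then have "inverse c *\<^sub>R inf (c *\<^sub>R a) (c *\<^sub>R b) \<le> inf a b"
    using c by (intro inf_greatest) simp_all
  then have "c *\<^sub>R (inverse c *\<^sub>R inf (c *\<^sub>R a) (c *\<^sub>R b)) \<le> c *\<^sub>R inf a b"
    using c by (intro scaleR_left_mono) auto
  then show "inf (c *\<^sub>R a) (c *\<^sub>R b) \<le> c *\<^sub>R inf a b"
    using c by simp
qed

lemma scaleR_sup:
  fixes a b :: "'a::{ordered_real_vector, lattice_ab_group_add}"
  assumes "0 < c"
  shows "c *\<^sub>R sup a b = sup (c *\<^sub>R a) (c *\<^sub>R b)"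
proof -
  have "c *\<^sub>R sup a b = - (c *\<^sub>R inf (- a) (- b))"
    by (simp only: sup_eq_neg_inf scaleR_minus_right)
  also have "\<dots> = sup (c *\<^sub>R a) (c *\<^sub>R b)"
    using assms by (simp only: scaleR_inf scaleR_minus_right sup_eq_neg_inf[of "c *\<^sub>R a"])
  finally show ?thesis .
qed

lemma labs_scaleR: "0 < c \<Longrightarrow> labs (c *\<^sub>R (x::'a::banach_lattice)) = c *\<^sub>R labs x"
  unfolding labs_def by (simp only: scaleR_sup scaleR_minus_right)

definition trunc_norm :: "'a::banach_lattice \<Rightarrow> 'a \<Rightarrow> real" where
  "trunc_norm h f = norm (inf (labs f) h)"

lemma trunc_norm_le_norm: "0 \<le> h \<Longrightarrow> trunc_norm h f \<le> norm (f::'a::banach_lattice)"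
  unfolding trunc_norm_def
  using norm_mono_nonneg[of "inf (labs f) h" "labs f"] labs_nonneg[of f] by auto

lemma trunc_norm_mono:
  "0 \<le> h \<Longrightarrow> labs f \<le> labs g \<Longrightarrow> h \<le> k \<Longrightarrow> trunc_norm h f \<le> trunc_norm k (g::'a::banach_lattice)"
  unfolding trunc_norm_def using labs_nonneg[of f] by (intro norm_mono_nonneg inf_mono) auto

lemma trunc_norm_triangle:
  fixes f g h :: "'a::banach_lattice"
  assumes "0 \<le> h"
  shows "trunc_norm h (f + g) \<le> trunc_norm h f + trunc_norm h g"
proof -
  have "inf (labs (f + g)) h \<le> inf (labs f + labs g) h"
    by (intro inf_mono labs_add_le) auto
  also have "\<dots> \<le> inf (labs f) h + inf (labs g) h"
    using assms labs_nonneg by (intro inf_add_le_add_inf) auto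
  finally have "norm (inf (labs (f + g)) h) \<le> norm (inf (labs f) h + inf (labs g) h)"
    using assms labs_nonneg by (intro norm_mono_nonneg) auto
  also have "\<dots> \<le> norm (inf (labs f) h) + norm (inf (labs g) h)"
    by (rule norm_triangle_ineq)
  finally show ?thesis
    unfolding trunc_norm_def .
qed

lemma trunc_norm_diff_triangle:
  "0 \<le> h \<Longrightarrow> trunc_norm h (x - z) \<le> trunc_norm h (x - y) + trunc_norm h (y - (z::'a::banach_lattice))"
  using trunc_norm_triangle[of h "x - y" "y - z"] by simp

lemma trunc_norm_0 [simp]: "0 \<le> h \<Longrightarrow> trunc_norm h (0::'a::banach_lattice) = 0"
  unfolding trunc_norm_def by (simp add: inf_absorb1)

lemma trunc_norm_scaleR_le:
  fixes f h :: "'a::banach_lattice"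
  assumes "0 \<le> h" "0 < s" "s \<le> t" "1 \<le> t"
  shows "trunc_norm h (s *\<^sub>R f) \<le> t * trunc_norm h f"
proof -
  have "inf (labs (s *\<^sub>R f)) h \<le> inf (t *\<^sub>R labs f) (t *\<^sub>R h)"
    using assms labs_nonneg[of f] scaleR_right_mono[of 1 t h]
    by (intro inf_mono) (auto simp: labs_scaleR intro: scaleR_right_mono)
  also have "\<dots> = t *\<^sub>R inf (labs f) h"
    using assms by (simp add: scaleR_inf)
  finally have "norm (inf (labs (s *\<^sub>R f)) h) \<le> norm (t *\<^sub>R inf (labs f) h)"
    using assms labs_nonneg by (intro norm_mono_nonneg) auto
  then show ?thesis
    using assms unfolding trunc_norm_def by simp
qed

lemma norm_less_if_trunc_norm_less_on_subspace:
  fixes E :: "'a::banach_lattice set"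
  assumes "subspace E" "0 \<le> h" "\<forall>s\<in>unitS E. \<epsilon> \<le> trunc_norm h s"
    and "f \<in> E" "0 < r" "r \<le> 1" "trunc_norm h f < r * \<epsilon>"
  shows "norm f < r"
proof (rule ccontr)
  assume "\<not> norm f < r"
  then have r_le: "r \<le> norm f" by simp
  then have f_pos: "0 < norm f"
    using assms(5) by linarith
  define g where "g = inverse (norm f) *\<^sub>R f"
  have "g \<in> unitS E"
    unfolding g_def unitS_def using assms f_pos by (auto intro: subspace_scale)
  then have "\<epsilon> \<le> trunc_norm h g"
    using assms(3) by blast
  also have "\<dots> \<le> inverse r * trunc_norm h f"
    unfolding g_def using assms r_le
    by (intro trunc_norm_scaleR_le) (auto simp: le_imp_inverse_le one_le_inverse)
  also have "\<dots> < \<epsilon>"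
    using assms by (simp add: field_simps)
  finally show False by simp
qed

definition positive_add_closed :: "'a::banach_lattice set \<Rightarrow> bool" where
  "positive_add_closed H \<longleftrightarrow> H \<noteq> {} \<and> (\<forall>h\<in>H. 0 \<le> h) \<and> (\<forall>h\<in>H. \<forall>k\<in>H. h + k \<in> H)"

definition dispersed :: "'a::banach_lattice set \<Rightarrow> 'a set \<Rightarrow> bool" where
  "dispersed H E \<longleftrightarrow> (\<exists>U. openin (un_topology_on H) U \<and> 0 \<in> U \<and> U \<inter> unitS E = {})"

lemma positive_add_closed_nonneg: "positive_add_closed H \<Longrightarrow> h \<in> H \<Longrightarrow> 0 \<le> h"
  unfolding positive_add_closed_def by blast

lemma istopology_un_topology_on:
  assumes H: "positive_add_closed H"
  shows "istopology (\<lambda>U. \<forall>x\<in>U. \<exists>h\<in>H. \<exists>\<epsilon>>0. \<forall>y. trunc_norm h (y - x) < \<epsilon> \<longrightarrow> y \<in> U)"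
  unfolding istopology_def
proof (intro conjI allI impI ballI)
  fix S T x
  assume S: "\<forall>x\<in>S. \<exists>h\<in>H. \<exists>\<epsilon>>0. \<forall>y. trunc_norm h (y - x) < \<epsilon> \<longrightarrow> y \<in> S"
    and T: "\<forall>x\<in>T. \<exists>h\<in>H. \<exists>\<epsilon>>0. \<forall>y. trunc_norm h (y - x) < \<epsilon> \<longrightarrow> y \<in> T"
    and x: "x \<in> S \<inter> T"
  obtain h1 e1 where h1: "h1 \<in> H" "e1 > 0" "\<forall>y. trunc_norm h1 (y - x) < e1 \<longrightarrow> y \<in> S"
    using S x by blast
  obtain h2 e2 where h2: "h2 \<in> H" "e2 > 0" "\<forall>y. trunc_norm h2 (y - x) < e2 \<longrightarrow> y \<in> T"
    using T x by blast
  have nonneg: "0 \<le> h1" "0 \<le> h2"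
    using H h1 h2 by (simp_all add: positive_add_closed_nonneg)
  have "h1 \<le> h1 + h2" "h2 \<le> h1 + h2"
    using nonneg by (simp_all add: add_increasing add_increasing2)
  then have le: "trunc_norm h1 f \<le> trunc_norm (h1 + h2) f" "trunc_norm h2 f \<le> trunc_norm (h1 + h2) f" for f
    using trunc_norm_mono nonneg by blast+
  show "\<exists>h\<in>H. \<exists>\<epsilon>>0. \<forall>y. trunc_norm h (y - x) < \<epsilon> \<longrightarrow> y \<in> S \<inter> T"
  proof (intro bexI[of _ "h1 + h2"] exI[of _ "min e1 e2"] conjI allI impI)
    show "h1 + h2 \<in> H"
      using H h1(1) h2(1) unfolding positive_add_closed_def by blast
    show "0 < min e1 e2"
      using h1(2) h2(2) by simp
    fix y assume "trunc_norm (h1 + h2) (y - x) < min e1 e2"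
    then have "trunc_norm h1 (y - x) < e1" "trunc_norm h2 (y - x) < e2"
      using le[of "y - x"] by linarith+
    then show "y \<in> S \<inter> T"
      using h1(3) h2(3) by blast
  qed
next
  fix K x
  assume "\<forall>U\<in>K. \<forall>x\<in>U. \<exists>h\<in>H. \<exists>\<epsilon>>0. \<forall>y. trunc_norm h (y - x) < \<epsilon> \<longrightarrow> y \<in> U"
    and "x \<in> \<Union>K"
  then show "\<exists>h\<in>H. \<exists>\<epsilon>>0. \<forall>y. trunc_norm h (y - x) < \<epsilon> \<longrightarrow> y \<in> \<Union>K"
    by (meson UnionE UnionI)
qed

lemma openin_un_topology_on:
  assumes "positive_add_closed H"
  shows "openin (un_topology_on H) U \<longleftrightarrow>
    (\<forall>x\<in>U. \<exists>h\<in>H. \<exists>\<epsilon>>0. \<forall>y. trunc_norm h (y - x) < \<epsilon> \<longrightarrow> y \<in> U)"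
proof -
  have "un_topology_on H =
      topology (\<lambda>U. \<forall>x\<in>U. \<exists>h\<in>H. \<exists>\<epsilon>>0. \<forall>y. trunc_norm h (y - x) < \<epsilon> \<longrightarrow> y \<in> U)"
    unfolding un_topology_on_def trunc_norm_def by (simp add: subset_eq)
  then show ?thesis
    using topology_inverse'[OF istopology_un_topology_on[OF assms]] by simp
qed

lemma openin_trunc_ball:
  assumes "positive_add_closed H" "h \<in> H"
  shows "openin (un_topology_on H) {y. trunc_norm h (y - x) < \<epsilon>}"
  unfolding openin_un_topology_on[OF assms(1)]
proof (intro ballI bexI[OF _ assms(2)])
  fix z assume "z \<in> {y. trunc_norm h (y - x) < \<epsilon>}"
  then have z: "trunc_norm h (z - x) < \<epsilon>" by simp
  show "\<exists>\<delta>>0. \<forall>y. trunc_norm h (y - z) < \<delta> \<longrightarrow> y \<in> {y. trunc_norm h (y - x) < \<epsilon>}"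
  proof (intro exI[of _ "\<epsilon> - trunc_norm h (z - x)"] conjI allI impI CollectI)
    fix y assume "trunc_norm h (y - z) < \<epsilon> - trunc_norm h (z - x)"
    then show "trunc_norm h (y - x) < \<epsilon>"
      using trunc_norm_diff_triangle[OF positive_add_closed_nonneg[OF assms], of y x z] by linarith
  qed (use z in simp)
qed

lemma topspace_un_topology_on:
  assumes "positive_add_closed H"
  shows "topspace (un_topology_on H) = UNIV"
proof -
  obtain h where "h \<in> H"
    using assms unfolding positive_add_closed_def by blast
  then have "openin (un_topology_on H) UNIV"
    unfolding openin_un_topology_on[OF assms] by (intro ballI bexI[of _ h] exI[of _ 1]) auto
  then show ?thesis
    by (meson openin_subset top.extremum_uniqueI)
qed

lemma open_if_openin_un_topology_on:
  assumes H: "positive_add_closed H" and U: "openin (un_topology_on H) U"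
  shows "open U"
  unfolding open_dist
proof
  fix x assume "x \<in> U"
  then obtain h \<epsilon> where h: "h \<in> H" "\<epsilon> > 0" "\<forall>y. trunc_norm h (y - x) < \<epsilon> \<longrightarrow> y \<in> U"
    using U unfolding openin_un_topology_on[OF H] by blast
  then show "\<exists>\<epsilon>>0. \<forall>y. dist y x < \<epsilon> \<longrightarrow> y \<in> U"
    using trunc_norm_le_norm[OF positive_add_closed_nonneg[OF H h(1)]]
    by (intro exI[of _ \<epsilon>] conjI allI impI) (auto simp: dist_norm intro: le_less_trans)
qed

lemma dispersed_iff_trunc_norm_bound:
  assumes H: "positive_add_closed H"
  shows "dispersed H E \<longleftrightarrow> (\<exists>h\<in>H. \<exists>\<epsilon>>0. \<forall>s\<in>unitS E. \<epsilon> \<le> trunc_norm h s)"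
proof
  assume "dispersed H E"
  then obtain U where U: "openin (un_topology_on H) U" "0 \<in> U" "U \<inter> unitS E = {}"
    unfolding dispersed_def by blast
  then obtain h \<epsilon> where h: "h \<in> H" "\<epsilon> > 0" "\<forall>y. trunc_norm h (y - 0) < \<epsilon> \<longrightarrow> y \<in> U"
    unfolding openin_un_topology_on[OF H] by blast
  have "\<epsilon> \<le> trunc_norm h s" if "s \<in> unitS E" for s
    using that U(3) h(3) by (metis diff_zero disjoint_iff not_le)
  then show "\<exists>h\<in>H. \<exists>\<epsilon>>0. \<forall>s\<in>unitS E. \<epsilon> \<le> trunc_norm h s"
    using h by blast
next
  assume "\<exists>h\<in>H. \<exists>\<epsilon>>0. \<forall>s\<in>unitS E. \<epsilon> \<le> trunc_norm h s"
  then obtain h \<epsilon> where h: "h \<in> H" "\<epsilon> > 0" "\<forall>s\<in>unitS E. \<epsilon> \<le> trunc_norm h s"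
    by blast
  have "0 \<in> {y. trunc_norm h (y - 0) < \<epsilon>}"
    using h(2) positive_add_closed_nonneg[OF H h(1)] by simp
  moreover have "{y. trunc_norm h (y - 0) < \<epsilon>} \<inter> unitS E = {}"
    using h(3) by fastforce
  ultimately show "dispersed H E"
    unfolding dispersed_def using openin_trunc_ball[OF H h(1)] by blast
qed

lemma dispersed_imp_subtopology_eq:
  fixes E :: "'a::banach_lattice set"
  assumes H: "positive_add_closed H" and E: "subspace E" and disp: "dispersed H E"
  shows "subtopology (un_topology_on H) E = top_of_set E"
proof -
  obtain h \<epsilon> where h: "h \<in> H" "\<epsilon> > 0" "\<forall>s\<in>unitS E. \<epsilon> \<le> trunc_norm h s"
    using disp unfolding dispersed_iff_trunc_norm_bound[OF H] by blast
  have h0: "0 \<le> h"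
    using H h(1) by (rule positive_add_closed_nonneg)
  show ?thesis
    unfolding topology_eq
  proof (intro allI iffI)
    fix S assume "openin (subtopology (un_topology_on H) E) S"
    then show "openin (top_of_set E) S"
      unfolding openin_subtopology
      using open_if_openin_un_topology_on[OF H] by (auto simp: Int_commute openin_open_Int)
  next
    fix S assume S: "openin (top_of_set E) S"
    show "openin (subtopology (un_topology_on H) E) S"
      unfolding openin_subopen[of _ S]
    proof
      fix x assume x: "x \<in> S"
      then obtain r0 where r0: "r0 > 0" "\<forall>y\<in>E. dist y x < r0 \<longrightarrow> y \<in> S"
        using S unfolding openin_euclidean_subtopology_iff by blast
      define r where "r = min r0 1"
      have r: "0 < r" "r \<le> 1"
        unfolding r_def using r0(1) by simp_all
      define T where "T = {y. trunc_norm h (y - x) < r * \<epsilon>} \<inter> E"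
      have "openin (subtopology (un_topology_on H) E) T"
        unfolding T_def openin_subtopology using openin_trunc_ball[OF H h(1)] by blast
      moreover have "x \<in> T"
        unfolding T_def using x S h0 h(2) r(1) openin_imp_subset by fastforce
      moreover have "T \<subseteq> S"
      proof
        fix y assume y: "y \<in> T"
        then have "y - x \<in> E"
          unfolding T_def using x S E openin_imp_subset by (blast intro: subspace_diff)
        then have "norm (y - x) < r"
          using norm_less_if_trunc_norm_less_on_subspace[OF E h0 h(3) _ r] y unfolding T_def by blast
        then show "y \<in> S"
          using r0(2) y unfolding T_def r_def by (simp add: dist_norm)
      qed
      ultimately show "\<exists>T. openin (subtopology (un_topology_on H) E) T \<and> x \<in> T \<and> T \<subseteq> S"
        by blast
    qed
  qed
qed

lemma subtopology_eq_imp_dispersed: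
  fixes E :: "'a::banach_lattice set"
  assumes "subspace E" "subtopology (un_topology_on H) E = top_of_set E"
  shows "dispersed H E"
proof -
  have "openin (top_of_set E) (E \<inter> ball 0 1)"
    by (rule openin_open_Int) simp
  then have "openin (subtopology (un_topology_on H) E) (E \<inter> ball 0 1)"
    using assms(2) by simp
  then obtain U where U: "openin (un_topology_on H) U" "E \<inter> ball 0 1 = U \<inter> E"
    unfolding openin_subtopology by blast
  moreover have "0 \<in> U"
    using U(2) subspace_0[OF assms(1)] by (metis IntD1 IntI centre_in_ball zero_less_one)
  moreover have "x \<notin> U" if "x \<in> unitS E" for x
  proof
    assume "x \<in> U"
    then have "x \<in> ball 0 1"
      using that U(2) unfolding unitS_def by blast
    then show False
      using that unfolding unitS_def by simp
  qed
  ultimately show ?thesis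
    unfolding dispersed_def by blast
qed

lemma dispersed_imp_complementary:
  fixes E :: "'a::banach_lattice set"
  assumes H: "positive_add_closed H" and E: "subspace E" and disp: "dispersed H E"
  shows "complementary (un_topology_on H) E"
  unfolding complementary_def
proof clarify
  fix x :: "'a \<Rightarrow> 'a" and F
  assume F: "F \<noteq> bot" "eventually (\<lambda>i. x i \<in> unitS UNIV) F"
    "limitin (un_topology_on H) x 0 F" "((\<lambda>i. infdist (x i) E) \<longlongrightarrow> 0) F"
  obtain h \<epsilon> where h: "h \<in> H" "\<epsilon> > 0" "\<forall>s\<in>unitS E. \<epsilon> \<le> trunc_norm h s"
    using disp unfolding dispersed_iff_trunc_norm_bound[OF H] by blast
  have h0: "0 \<le> h"
    using H h(1) by (rule positive_add_closed_nonneg)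
  define \<delta> where "\<delta> = min (\<epsilon> / 4) (1 / 4)"
  have \<delta>: "\<delta> > 0"
    unfolding \<delta>_def using h(2) by simp
  have "eventually (\<lambda>i. x i \<in> {y. trunc_norm h (y - 0) < \<delta>}) F"
    using \<delta> h0 by (intro limitinD[OF F(3) openin_trunc_ball[OF H h(1)]]) simp
  moreover have "eventually (\<lambda>i. infdist (x i) E < \<delta>) F"
    using order_tendstoD(2)[OF F(4) \<delta>] .
  ultimately have "eventually (\<lambda>i. False) F"
    using F(2)
  proof eventually_elim
    case (elim i)
    then have unit: "norm (x i) = 1" and small: "trunc_norm h (x i) < \<delta>"
      unfolding unitS_def by auto
    have E_ne: "E \<noteq> {}"
      using subspace_0[OF E] by blast
    then have "(INF a\<in>E. dist (x i) a) < \<delta>"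
      using elim(2) by (simp add: infdist_notempty)
    then obtain a where a: "a \<in> E" "dist (x i) a < \<delta>"
      using cINF_less_iff[OF E_ne bdd_below_image_dist] by blast
    have "trunc_norm h a \<le> trunc_norm h (x i) + trunc_norm h (a - x i)"
      using trunc_norm_triangle[OF h0, of "x i" "a - x i"] by simp
    also have "\<dots> \<le> trunc_norm h (x i) + norm (a - x i)"
      using trunc_norm_le_norm[OF h0] by simp
    also have "\<dots> < (1 / 2) * \<epsilon>"
      using small a(2) unfolding \<delta>_def by (simp add: dist_norm norm_minus_commute)
    finally have "norm a < 1 / 2"
      using norm_less_if_trunc_norm_less_on_subspace[OF E h0 h(3) a(1), of "1 / 2"] by simp
    moreover have "norm (x i - a) < 1 / 4"
      using a(2) unfolding \<delta>_def by (simp add: dist_norm)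
    ultimately show False
      using unit norm_triangle_ineq[of a "x i - a"] by simp
  qed
  then show False
    using F(1) by (simp add: eventually_False)
qed

text \<open>Conversely, if \<open>E\<close> is not dispersed, the identity along the trace of the
neighbourhood filter of \<open>0\<close> on \<open>S\<^sub>E\<close> is a unit net that is null for the topology
and lies in \<open>E\<close>.\<close>

lemma complementary_imp_dispersed:
  fixes E :: "'a::banach_lattice set"
  assumes H: "positive_add_closed H" and compl: "complementary (un_topology_on H) E"
  shows "dispersed H E"
proof (rule ccontr)
  assume not_disp: "\<not> dispersed H E"
  define F where "F = inf (nhdsin (un_topology_on H) 0) (principal (unitS E))"
  have top: "topspace (un_topology_on H) = UNIV"
    by (rule topspace_un_topology_on[OF H])
  have "F \<noteq> bot"
  proof
    assume "F = bot"
    then have "eventually (\<lambda>y. False) F"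
      by simp
    then have "eventually (\<lambda>y. y \<in> unitS E \<longrightarrow> False) (nhdsin (un_topology_on H) 0)"
      unfolding F_def eventually_inf_principal .
    then show False
      using not_disp unfolding eventually_nhdsin top dispersed_def by blast
  qed
  moreover have "eventually (\<lambda>y. id y \<in> unitS UNIV) F"
    unfolding F_def eventually_inf_principal by (rule always_eventually) (simp add: unitS_def)
  moreover have "limitin (un_topology_on H) id 0 F"
    unfolding limitin_def
  proof (intro conjI allI impI)
    fix U assume "openin (un_topology_on H) U \<and> 0 \<in> U"
    then have "eventually (\<lambda>y. y \<in> U) (nhdsin (un_topology_on H) 0)"
      unfolding eventually_nhdsin by blast
    then show "eventually (\<lambda>y. id y \<in> U) F"
      unfolding F_def eventually_inf_principal by (rule eventually_mono) simp
  qed (simp add: top)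
  moreover have "((\<lambda>y. infdist (id y) E) \<longlongrightarrow> 0) F"
  proof (rule tendsto_eventually)
    show "eventually (\<lambda>y. infdist (id y) E = 0) F"
      unfolding F_def eventually_inf_principal by (rule always_eventually) (simp add: unitS_def)
  qed
  ultimately show False
    using compl unfolding complementary_def by blast
qed

lemma istopology_gap_topology:
  "istopology (\<lambda>W. W \<subseteq> Collect closed_subspace \<and>
     (\<forall>G\<in>W. \<exists>\<delta>>0. \<forall>H. closed_subspace H \<and> gap_dist G H < ennreal \<delta> \<longrightarrow> H \<in> W))"
  unfolding istopology_def
proof (rule conjI; intro allI impI)
  fix S T :: "'a set set"
  assume S: "S \<subseteq> Collect closed_subspace \<and>
      (\<forall>G\<in>S. \<exists>\<delta>>0. \<forall>H. closed_subspace H \<and> gap_dist G H < ennreal \<delta> \<longrightarrow> H \<in> S)"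
    and T: "T \<subseteq> Collect closed_subspace \<and>
      (\<forall>G\<in>T. \<exists>\<delta>>0. \<forall>H. closed_subspace H \<and> gap_dist G H < ennreal \<delta> \<longrightarrow> H \<in> T)"
  show "S \<inter> T \<subseteq> Collect closed_subspace \<and>
      (\<forall>G\<in>S \<inter> T. \<exists>\<delta>>0. \<forall>H. closed_subspace H \<and> gap_dist G H < ennreal \<delta> \<longrightarrow> H \<in> S \<inter> T)"
  proof (intro conjI ballI)
    show "S \<inter> T \<subseteq> Collect closed_subspace"
      using S by blast
    fix G assume "G \<in> S \<inter> T"
    then obtain d1 d2
      where d1: "d1 > 0" "\<forall>H. closed_subspace H \<and> gap_dist G H < ennreal d1 \<longrightarrow> H \<in> S"
        and d2: "d2 > 0" "\<forall>H. closed_subspace H \<and> gap_dist G H < ennreal d2 \<longrightarrow> H \<in> T"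
      using S T by blast
    show "\<exists>\<delta>>0. \<forall>H. closed_subspace H \<and> gap_dist G H < ennreal \<delta> \<longrightarrow> H \<in> S \<inter> T"
    proof (intro exI[of _ "min d1 d2"] conjI allI impI)
      fix H assume H: "closed_subspace H \<and> gap_dist G H < ennreal (min d1 d2)"
      have "ennreal (min d1 d2) \<le> ennreal d1" "ennreal (min d1 d2) \<le> ennreal d2"
        by (simp_all add: ennreal_leI)
      then show "H \<in> S \<inter> T"
        using H d1(2) d2(2) by (meson IntI order.strict_trans2)
    qed (use d1 d2 in simp)
  qed
next
  fix K :: "'a set set set"
  assume K: "\<forall>W\<in>K. W \<subseteq> Collect closed_subspace \<and>
    (\<forall>G\<in>W. \<exists>\<delta>>0. \<forall>H. closed_subspace H \<and> gap_dist G H < ennreal \<delta> \<longrightarrow> H \<in> W)"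
  show "\<Union>K \<subseteq> Collect closed_subspace \<and>
    (\<forall>G\<in>\<Union>K. \<exists>\<delta>>0. \<forall>H. closed_subspace H \<and> gap_dist G H < ennreal \<delta> \<longrightarrow> H \<in> \<Union>K)"
  proof (intro conjI ballI)
    show "\<Union>K \<subseteq> Collect closed_subspace"
      using K by blast
    fix G assume "G \<in> \<Union>K"
    then show "\<exists>\<delta>>0. \<forall>H. closed_subspace H \<and> gap_dist G H < ennreal \<delta> \<longrightarrow> H \<in> \<Union>K"
      using K by (meson UnionE UnionI)
  qed
qed

lemma openin_gap_topology:
  "openin gap_topology W \<longleftrightarrow> W \<subseteq> Collect closed_subspace \<and>
     (\<forall>G\<in>W. \<exists>\<delta>>0. \<forall>H. closed_subspace H \<and> gap_dist G H < ennreal \<delta> \<longrightarrow> H \<in> W)"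
  by (simp only: gap_topology_def topology_inverse'[OF istopology_gap_topology])

lemma gap_dist_less_imp_near:
  assumes "gap_dist G H < ennreal \<delta>" "s \<in> unitS H"
  shows "\<exists>g\<in>unitS G. dist g s < \<delta>"
proof -
  have "(INF g\<in>unitS G. ennreal (dist g s)) \<le> (SUP y\<in>unitS H. INF g\<in>unitS G. ennreal (dist g y))"
    using assms(2) by (rule SUP_upper)
  also have "\<dots> \<le> gap_dist G H"
    unfolding gap_dist_def hausdorff_dist_def by simp
  finally have "(INF g\<in>unitS G. ennreal (dist g s)) < ennreal \<delta>"
    using assms(1) by simp
  then obtain g where "g \<in> unitS G" "ennreal (dist g s) < ennreal \<delta>"
    unfolding INF_less_iff by blast
  then show ?thesis
    by (auto simp: ennreal_less_iff)
qed

lemma openin_gap_topology_dispersed: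
  fixes H :: "'a::banach_lattice set"
  assumes H: "positive_add_closed H"
  shows "openin gap_topology {E. closed_subspace E \<and> dispersed H E}"
  unfolding openin_gap_topology
proof (intro conjI ballI)
  fix G assume "G \<in> {E. closed_subspace E \<and> dispersed H E}"
  then obtain h \<epsilon> where h: "h \<in> H" "\<epsilon> > 0" "\<forall>s\<in>unitS G. \<epsilon> \<le> trunc_norm h s"
    unfolding dispersed_iff_trunc_norm_bound[OF H] by blast
  have h0: "0 \<le> h"
    using H h(1) by (rule positive_add_closed_nonneg)
  have "\<epsilon> / 2 \<le> trunc_norm h s"
    if near: "gap_dist G G' < ennreal (\<epsilon> / 2)" "s \<in> unitS G'" for G' s
  proof -
    obtain g where g: "g \<in> unitS G" "dist g s < \<epsilon> / 2"
      using gap_dist_less_imp_near[OF near] by blast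
    have "\<epsilon> \<le> trunc_norm h s + trunc_norm h (g - s)"
      using h(3) g(1) trunc_norm_triangle[OF h0, of s "g - s"] by force
    also have "\<dots> \<le> trunc_norm h s + dist g s"
      using trunc_norm_le_norm[OF h0] by (simp add: dist_norm)
    finally show ?thesis
      using g(2) by simp
  qed
  then show "\<exists>\<delta>>0. \<forall>G'. closed_subspace G' \<and> gap_dist G G' < ennreal \<delta> \<longrightarrow>
      G' \<in> {E. closed_subspace E \<and> dispersed H E}"
    unfolding dispersed_iff_trunc_norm_bound[OF H] using h(1,2)
    by (intro exI[of _ "\<epsilon> / 2"]) (auto intro!: bexI[of _ h] exI[of _ "\<epsilon> / 2"])
qed blast

lemma order_continuous_inf_small:
  fixes h :: "'a::banach_lattice"
  assumes oc: "order_continuous h" and h0: "0 \<le> h"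
    and D: "D \<noteq> {}" "D \<subseteq> {y. 0 \<le> y}" "\<forall>a\<in>D. \<forall>b\<in>D. \<exists>c\<in>D. c \<le> a \<and> c \<le> b"
      "\<forall>z. (\<forall>d\<in>D. z \<le> d) \<longrightarrow> z \<le> 0"
    and "\<epsilon> > 0"
  shows "\<exists>d\<in>D. norm (inf d h) < \<epsilon>"
proof -
  let ?D = "(\<lambda>d. inf d h) ` D"
  have "?D \<noteq> {}"
    using D(1) by blast
  moreover have "?D \<subseteq> {y. 0 \<le> y \<and> y \<le> labs h}"
    using D(2) h0 by (auto simp: labs_eq_self)
  moreover have "\<exists>c\<in>?D. c \<le> a \<and> c \<le> b" if ab: "a \<in> ?D" "b \<in> ?D" for a b
  proof -
    obtain a' b' where "a' \<in> D" "b' \<in> D" "a = inf a' h" "b = inf b' h"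
      using ab by blast
    moreover obtain c where "c \<in> D" "c \<le> a'" "c \<le> b'"
      using D(3) calculation(1,2) by blast
    ultimately show ?thesis
      by (intro bexI[of _ "inf c h"] conjI imageI) (simp_all add: le_infI1)
  qed
  moreover have "z \<le> 0" if z: "\<forall>d\<in>?D. z \<le> d" for z
  proof -
    have "z \<le> d" if "d \<in> D" for d
      using z that le_inf_iff by blast
    then show ?thesis
      using D(4) by blast
  qed
  ultimately have "\<exists>d\<in>?D. norm d < \<epsilon>"
    using order_continuous_def[THEN iffD1, OF oc, rule_format, of ?D \<epsilon>] assms(7) by blast
  then show ?thesis
    by blast
qed

lemma order_continuous_0: "order_continuous (0::'a::banach_lattice)"
  unfolding order_continuous_def
proof (intro allI impI; elim conjE)
  fix D :: "'a set" and \<epsilon> :: real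
  assume "D \<noteq> {}" "D \<subseteq> {y. 0 \<le> y \<and> y \<le> labs 0}" "0 < \<epsilon>"
  then show "\<exists>d\<in>D. norm d < \<epsilon>"
    by (metis (no_types, lifting) antisym equals0I labs_0 mem_Collect_eq norm_zero subsetD)
qed

lemma order_continuous_add:
  fixes h1 h2 :: "'a::banach_lattice"
  assumes oc1: "order_continuous h1" "0 \<le> h1" and oc2: "order_continuous h2" "0 \<le> h2"
  shows "order_continuous (h1 + h2)"
  unfolding order_continuous_def
proof (intro allI impI; elim conjE)
  fix D :: "'a set" and \<epsilon> :: real
  assume D: "D \<noteq> {}" "D \<subseteq> {y. 0 \<le> y \<and> y \<le> labs (h1 + h2)}"
    "\<forall>a\<in>D. \<forall>b\<in>D. \<exists>c\<in>D. c \<le> a \<and> c \<le> b" "\<forall>z. (\<forall>d\<in>D. z \<le> d) \<longrightarrow> z \<le> 0"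
    and \<epsilon>: "0 < \<epsilon>"
  have D_nonneg: "D \<subseteq> {y. 0 \<le> y}"
    using D(2) by blast
  have "\<epsilon> / 2 > 0"
    using \<epsilon> by simp
  then obtain d1 d2 where d1: "d1 \<in> D" "norm (inf d1 h1) < \<epsilon> / 2"
    and d2: "d2 \<in> D" "norm (inf d2 h2) < \<epsilon> / 2"
    using order_continuous_inf_small[OF oc1 D(1) D_nonneg D(3,4)]
      order_continuous_inf_small[OF oc2 D(1) D_nonneg D(3,4)] by blast
  obtain c where c: "c \<in> D" "c \<le> d1" "c \<le> d2"
    using D(3) d1(1) d2(1) by blast
  have c0: "0 \<le> c" and c_le: "c \<le> h1 + h2"
    using c(1) D(2) oc1(2) oc2(2) by (auto simp: labs_eq_self)
  have "c = inf (h1 + h2) c"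
    using c_le by (simp add: inf_absorb2)
  also have "\<dots> \<le> inf h1 c + inf h2 c"
    by (rule inf_add_le_add_inf[OF oc1(2) oc2(2) c0])
  finally have "norm c \<le> norm (inf h1 c + inf h2 c)"
    by (rule norm_mono_nonneg[OF c0])
  also have "\<dots> \<le> norm (inf h1 c) + norm (inf h2 c)"
    by (rule norm_triangle_ineq)
  also have "norm (inf h1 c) \<le> norm (inf d1 h1)"
    using c(2) oc1(2) c0 by (intro norm_mono_nonneg) (simp, meson inf_le1 inf_le2 le_inf_iff order_trans)
  also have "norm (inf h2 c) \<le> norm (inf d2 h2)"
    using c(3) oc2(2) c0 by (intro norm_mono_nonneg) (simp, meson inf_le1 inf_le2 le_inf_iff order_trans)
  finally show "\<exists>d\<in>D. norm d < \<epsilon>"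
    using c(1) d1(2) d2(2) by (intro bexI[of _ c]) simp_all
qed

lemma positive_add_closed_nonneg_elements:
  "positive_add_closed {h::'a::banach_lattice. 0 \<le> h}"
  unfolding positive_add_closed_def by auto

lemma positive_add_closed_order_continuous:
  "positive_add_closed {h::'a::banach_lattice. 0 \<le> h \<and> order_continuous h}"
  unfolding positive_add_closed_def using order_continuous_0 order_continuous_add by auto

lemma weakly_dispersed_eq: "weakly_dispersed = dispersed {h::'a::banach_lattice. 0 \<le> h}"
  by (simp add: fun_eq_iff weakly_dispersed_def dispersed_def un_topology_def)

lemma strongly_dispersed_eq:
  "strongly_dispersed = dispersed {h::'a::banach_lattice. 0 \<le> h \<and> order_continuous h}"
  by (simp add: fun_eq_iff strongly_dispersed_def dispersed_def una_topology_def)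

lemma dispersed_iff_subtopology_eq_and_complementary:
  fixes E :: "'a::banach_lattice set"
  assumes "positive_add_closed H" "subspace E"
  shows "(dispersed H E \<longleftrightarrow> subtopology (un_topology_on H) E = top_of_set E) \<and>
         (dispersed H E \<longleftrightarrow> complementary (un_topology_on H) E)"
  using assms dispersed_imp_subtopology_eq subtopology_eq_imp_dispersed
    dispersed_imp_complementary complementary_imp_dispersed by blast

theorem proposition4p1:
  shows "openin (gap_topology :: 'a::banach_lattice set topology)
           {E. closed_subspace E \<and> weakly_dispersed E} \<and>
         openin (gap_topology :: 'a::banach_lattice set topology)
           {E. closed_subspace E \<and> strongly_dispersed E} \<and>
         (\<forall>E::'a::banach_lattice set. closed_subspace E \<longrightarrow>
           ((weakly_dispersed E \<longleftrightarrow> subtopology un_topology E = top_of_set E) \<and>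
            (weakly_dispersed E \<longleftrightarrow> complementary un_topology E))) \<and>
         (\<forall>E::'a::banach_lattice set. closed_subspace E \<longrightarrow>
           ((strongly_dispersed E \<longleftrightarrow> subtopology una_topology E = top_of_set E) \<and>
            (strongly_dispersed E \<longleftrightarrow> complementary una_topology E)))"
  unfolding weakly_dispersed_eq strongly_dispersed_eq un_topology_def una_topology_def
  using openin_gap_topology_dispersed dispersed_iff_subtopology_eq_and_complementary
    positive_add_closed_nonneg_elements positive_add_closed_order_continuous
  unfolding closed_subspace_def by blast

end
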